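(* Fix $n\in\mathbb N$ and for $j\in\mathbb Z$ put $\kappa(j)=\cos\big(\tfrac{j\pi}{2(n+1)}\big)$ and $\lambda(j)=\sin\big(\tfrac{j\pi}{2(n+1)}\big)$. Let $a\in\mathbb Z$ and let $f,g,h\in\{\kappa,-\kappa,\lambda,-\lambda\}$. (1) If $m\in2\mathbb Z$ and $|m|\le 2n$, then $\sum_{j=0}^{2n+1}(-1)^j f(a+mj)=0$. (2) If $s,t\in\mathbb Z$ with $\max\{|s|,|t|\}\le n-1$ and $s\equiv t\pmod 2$, then \[\sum_{j=0}^{2n+1}(-1)^j f(a+2j)\,g(sj)\,h(tj)=0=\sum_{j=0}^{2n+1}(-1)^j g(sj)\,h(tj).\] *)

theory Defs
  imports Complex_Main
begin

definition kappa :: "nat \<Rightarrow> int \<Rightarrow> real" where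
  "kappa n j = cos (real_of_int j * pi / (2 * (real n + 1)))"

definition lambda :: "nat \<Rightarrow> int \<Rightarrow> real" where
  "lambda n j = sin (real_of_int j * pi / (2 * (real n + 1)))"

definition trig_family :: "nat \<Rightarrow> (int \<Rightarrow> real) set" where
  "trig_family n = {kappa n, (\<lambda>j. - kappa n j), lambda n, (\<lambda>j. - lambda n j)}"

end

theory Submission
  imports Defs
begin

text \<open>Every member of the family is a phase-shifted cosine wave
  \<open>x \<mapsto> cos (c + x\<theta>)\<close> with \<open>\<theta> = \<pi>/(2(n+1))\<close>. Multiplying the alternating sum
  \<open>\<Sum>j<N. (-1)^j cos (c + jp)\<close> by \<open>2 cos (p/2)\<close> makes it telescope, and for
  \<open>N = 2n+2\<close>, \<open>p = k\<theta>\<close> with \<open>k\<close> even the two boundary terms agree because \<open>Np = k\<pi>\<close>;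
  the bound \<open>|k| \<le> 2n\<close> keeps \<open>cos (p/2)\<close> positive. Products of two or three waves
  split, by the product-to-sum formula, into waves of frequencies \<open>s \<plusminus> t\<close> and
  \<open>2 \<plusminus> s \<plusminus> t\<close>, all even and of absolute value at most \<open>2n\<close>.\<close>

lemma alternating_cos_sum_telescope:
  fixes c p :: real
  shows "2 * cos (p/2) * (\<Sum>j<N. (-1)^j * cos (c + real j * p))
           = cos (c - p/2) - (-1)^N * cos (c + (real N - 1/2) * p)"
proof (induction N)
  case 0
  show ?case by simp
next
  case (Suc N)
  have "2 * cos (p/2) * cos (c + real N * p)
          = cos (c + (real N - 1/2) * p) + cos (c + (real (Suc N) - 1/2) * p)"
    using cos_times_cos[of "c + real N * p" "p/2"] by (simp add: algebra_simps)
  then show ?case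
    using Suc.IH by (simp add: distrib_left algebra_simps)
qed

lemma alternating_cos_sum_eq_0:
  fixes c p :: real
  assumes "even N" and "cos (p/2) \<noteq> 0" and "real N * p = 2 * pi * of_int q"
  shows "(\<Sum>j<N. (-1)^j * cos (c + real j * p)) = 0"
proof -
  have "c + (real N - 1/2) * p = (c - p/2) + 2 * pi * of_int q"
    using assms(3) by (simp add: algebra_simps)
  also have "cos \<dots> = cos (c - p/2)"
    by (simp add: cos_add)
  finally have "cos (c + (real N - 1/2) * p) = cos (c - p/2)" .
  then show ?thesis
    using alternating_cos_sum_telescope[of p c N] assms(1,2) by simp
qed

definition trig_angle :: "nat \<Rightarrow> real" where
  "trig_angle n = pi / (2 * (real n + 1))"

definition wave :: "nat \<Rightarrow> int \<Rightarrow> real \<Rightarrow> nat \<Rightarrow> real" where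
  "wave n k c j = cos (c + of_int k * real j * trig_angle n)"

definition alt_wave_sum :: "nat \<Rightarrow> int \<Rightarrow> real \<Rightarrow> real" where
  "alt_wave_sum n k c = (\<Sum>j=0..2*n+1. (-1)^j * wave n k c j)"

lemma alt_wave_sum_eq_0:
  assumes "even k" and "\<bar>k\<bar> \<le> 2 * int n"
  shows "alt_wave_sum n k c = 0"
proof -
  define p where "p = of_int k * trig_angle n"
  obtain q where q: "k = 2 * q" using assms(1) by blast
  have period: "real (2*n+2) * p = 2 * pi * of_int q"
    unfolding p_def q trig_angle_def by (simp add: field_simps)
  have "real_of_int \<bar>k\<bar> \<le> real_of_int (2 * int n)"
    using assms(2) by (simp only: of_int_le_iff)
  then have "\<bar>real_of_int k\<bar> < 2 * (real n + 1)"
    by simp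
  then have "\<bar>real_of_int k\<bar> / (2 * (real n + 1)) * (pi/2) < 1 * (pi/2)"
    by (intro mult_strict_right_mono) auto
  then have "\<bar>p/2\<bar> < pi/2"
    unfolding p_def trig_angle_def by (simp add: abs_mult field_simps)
  then have "cos (p/2) \<noteq> 0"
    using cos_gt_zero_pi[of "p/2"] by linarith
  moreover have "{0..2*n+1} = {..<2*n+2}" by auto
  ultimately show ?thesis
    using alternating_cos_sum_eq_0[OF _ _ period, of c]
    unfolding alt_wave_sum_def wave_def p_def by (simp add: mult.assoc mult.commute mult.left_commute)
qed

lemma wave_mult:
  "wave n k1 c1 j * wave n k2 c2 j
     = (wave n (k1 + k2) (c1 + c2) j + wave n (k1 - k2) (c1 - c2) j) / 2"
  unfolding wave_def cos_times_cos by (simp add: algebra_simps)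

lemma wave_mult3:
  "wave n k1 c1 j * wave n k2 c2 j * wave n k3 c3 j
     = (wave n (k1 + k2 + k3) (c1 + c2 + c3) j + wave n (k1 + k2 - k3) (c1 + c2 - c3) j
      + wave n (k1 - k2 + k3) (c1 - c2 + c3) j + wave n (k1 - k2 - k3) (c1 - c2 - c3) j) / 4"
proof -
  have "wave n k1 c1 j * wave n k2 c2 j * wave n k3 c3 j
      = (wave n (k1 + k2) (c1 + c2) j * wave n k3 c3 j + wave n (k1 - k2) (c1 - c2) j * wave n k3 c3 j) / 2"
    by (simp only: wave_mult add_divide_distrib distrib_right times_divide_eq_left)
  also have "\<dots> = (wave n (k1 + k2 + k3) (c1 + c2 + c3) j + wave n (k1 + k2 - k3) (c1 + c2 - c3) j
      + wave n (k1 - k2 + k3) (c1 - c2 + c3) j + wave n (k1 - k2 - k3) (c1 - c2 - c3) j) / 4"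
    by (simp only: wave_mult) (simp add: field_simps)
  finally show ?thesis .
qed

lemma alt_wave_sum_mult:
  "(\<Sum>j=0..2*n+1. (-1)^j * wave n k1 c1 j * wave n k2 c2 j)
     = (alt_wave_sum n (k1 + k2) (c1 + c2) + alt_wave_sum n (k1 - k2) (c1 - c2)) / 2"
  unfolding alt_wave_sum_def sum.distrib[symmetric] sum_divide_distrib
  by (intro sum.cong refl) (simp add: mult.assoc wave_mult field_simps)

lemma alt_wave_sum_mult3:
  "(\<Sum>j=0..2*n+1. (-1)^j * wave n k1 c1 j * wave n k2 c2 j * wave n k3 c3 j)
     = (alt_wave_sum n (k1 + k2 + k3) (c1 + c2 + c3) + alt_wave_sum n (k1 + k2 - k3) (c1 + c2 - c3)
      + alt_wave_sum n (k1 - k2 + k3) (c1 - c2 + c3) + alt_wave_sum n (k1 - k2 - k3) (c1 - c2 - c3)) / 4"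
  unfolding alt_wave_sum_def sum.distrib[symmetric] sum_divide_distrib
  by (intro sum.cong refl) (simp only: mult.assoc wave_mult3[unfolded mult.assoc], simp add: field_simps)

lemma trig_family_wave:
  assumes "f \<in> trig_family n"
  obtains c where "\<And>b m j. f (b + m * int j) = wave n m (c + of_int b * trig_angle n) j"
proof -
  have shift: "cos (c + of_int (b + m * int j) * trig_angle n) = wave n m (c + of_int b * trig_angle n) j"
    for c b m j
    unfolding wave_def by (simp add: algebra_simps)
  have "\<exists>c. \<forall>x. f x = cos (c + of_int x * trig_angle n)"
    using assms unfolding trig_family_def
  proof (elim insertE emptyE)
    assume "f = kappa n"
    then show ?thesis unfolding kappa_def trig_angle_def by (intro exI[of _ 0]) simp
  next
    assume "f = (\<lambda>j. - kappa n j)"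
    then show ?thesis unfolding kappa_def trig_angle_def by (intro exI[of _ pi]) simp
  next
    assume "f = lambda n"
    then show ?thesis unfolding lambda_def trig_angle_def
      by (intro exI[of _ "-pi/2"]) (simp add: cos_diff)
  next
    assume "f = (\<lambda>j. - lambda n j)"
    then show ?thesis unfolding lambda_def trig_angle_def
      by (intro exI[of _ "pi/2"]) (simp add: cos_add)
  qed
  then show ?thesis using shift that by metis
qed

theorem lemma4p10:
  fixes n :: nat and a :: int and f g h :: "int \<Rightarrow> real"
  assumes "f \<in> trig_family n" and "g \<in> trig_family n" and "h \<in> trig_family n"
  shows "(\<forall>m::int. even m \<and> \<bar>m\<bar> \<le> 2 * int n \<longrightarrow>
            (\<Sum>j=0..2*n+1. (-1::real)^j * f (a + m * int j)) = 0)
       \<and> (\<forall>s t :: int. max \<bar>s\<bar> \<bar>t\<bar> \<le> int n - 1 \<and> s mod 2 = t mod 2 \<longrightarrow>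
            (\<Sum>j=0..2*n+1. (-1::real)^j * f (a + 2 * int j) * g (s * int j) * h (t * int j)) = 0
          \<and> (\<Sum>j=0..2*n+1. (-1::real)^j * g (s * int j) * h (t * int j)) = 0)"
proof -
  obtain cf where f: "\<And>b m j. f (b + m * int j) = wave n m (cf + of_int b * trig_angle n) j"
    using trig_family_wave[OF assms(1)] by blast
  obtain cg where g: "\<And>m j. g (m * int j) = wave n m cg j"
    using trig_family_wave[OF assms(2)] by (metis add_0 of_int_0 mult_zero_left add_0_right)
  obtain ch where h: "\<And>m j. h (m * int j) = wave n m ch j"
    using trig_family_wave[OF assms(3)] by (metis add_0 of_int_0 mult_zero_left add_0_right)
  let ?c = "cf + of_int a * trig_angle n"
  have part1: "(\<Sum>j=0..2*n+1. (-1::real)^j * f (a + m * int j)) = 0"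
    if "even m" and "\<bar>m\<bar> \<le> 2 * int n" for m
    using alt_wave_sum_eq_0[OF that] by (simp add: f alt_wave_sum_def)
  have part2: "(\<Sum>j=0..2*n+1. (-1::real)^j * f (a + 2 * int j) * g (s * int j) * h (t * int j)) = 0
          \<and> (\<Sum>j=0..2*n+1. (-1::real)^j * g (s * int j) * h (t * int j)) = 0"
    if "max \<bar>s\<bar> \<bar>t\<bar> \<le> int n - 1" and "s mod 2 = t mod 2" for s t
  proof -
    have "even (s + t)" "even (s - t)" "even (2 + s + t)" "even (2 + s - t)"
      "even (2 - s + t)" "even (2 - s - t)"
      using that(2) by presburger+
    moreover have "\<bar>s + t\<bar> \<le> 2 * int n" "\<bar>s - t\<bar> \<le> 2 * int n" "\<bar>2 + s + t\<bar> \<le> 2 * int n"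
      "\<bar>2 + s - t\<bar> \<le> 2 * int n" "\<bar>2 - s + t\<bar> \<le> 2 * int n" "\<bar>2 - s - t\<bar> \<le> 2 * int n"
      using that(1) by arith+
    ultimately show ?thesis
      using f[of a 2] g h alt_wave_sum_mult3[of n 2 ?c s cg t ch] alt_wave_sum_mult[of n s cg t ch]
      by (simp add: alt_wave_sum_eq_0)
  qed
  show ?thesis
    using part1 part2 by blast
qed

end
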